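(* Let $L$ be a sharp C-lattice. (i) If $x,y\in L$ are join principal elements with $(x:y)\vee(y:x)=x\vee y$, then $x\vee y=1$. (ii) If $L$ has a unique maximal element $m$ and $m=x_1\vee\cdots\vee x_n$ with $x_1,\dots,x_n$ join principal elements, then $m=x_i$ for some $i$.
   Context: A multiplicative lattice is a complete lattice $(L,\le)$ with bottom $0$ and top $1$ which is also a commutative monoid with identity $1$ such that $a(\bigvee_\alpha b_\alpha)=\bigvee_\alpha(ab_\alpha)$ for all $a,b_\alpha\in L$. For $x,y\in L$, $(y:x)=\bigvee\{a\in L: ax\le y\}$. An element $c$ is compact if $c\le\bigvee S$ implies $c\le\bigvee T$ for some finite $T\subseteq S$. A C-lattice is a multiplicative lattice in which $1$ is compact, the product of two compact elements is compact, and every element is a join of compact elements. A maximal element is a maximal element of $L\setminus\{1\}$. An element $x$ is join principal if $y\vee(z:x)=((yx\vee z):x)$ for all $y,z\in L$. $L$ is sharp if whenever $a_1a_2\le b$ with $a_1,a_2,b\in L$, there exist $b_1,b_2\in L$ with $a_i\le b_i$ ($i=1,2$) and $b=b_1b_2$. *)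

theory Defs
  imports Main
begin

definition mult_lattice :: "('a::complete_lattice \<Rightarrow> 'a \<Rightarrow> 'a) \<Rightarrow> bool" where
  "mult_lattice mult \<longleftrightarrow>
     (\<forall>a b c. mult (mult a b) c = mult a (mult b c)) \<and>
     (\<forall>a b. mult a b = mult b a) \<and>
     (\<forall>a. mult a top = a) \<and>
     (\<forall>a B. mult a (Sup B) = Sup (mult a ` B))"

definition lcolon :: "('a::complete_lattice \<Rightarrow> 'a \<Rightarrow> 'a) \<Rightarrow> 'a \<Rightarrow> 'a \<Rightarrow> 'a" where
  "lcolon mult y x = Sup {a. mult a x \<le> y}"

definition lcompact :: "'a::complete_lattice \<Rightarrow> bool" where
  "lcompact c \<longleftrightarrow> (\<forall>S. c \<le> Sup S \<longrightarrow> (\<exists>T. T \<subseteq> S \<and> finite T \<and> c \<le> Sup T))"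

definition C_lattice :: "('a::complete_lattice \<Rightarrow> 'a \<Rightarrow> 'a) \<Rightarrow> bool" where
  "C_lattice (mult::'a \<Rightarrow> 'a \<Rightarrow> 'a) \<longleftrightarrow> mult_lattice mult \<and> lcompact (top::'a) \<and>
     (\<forall>a b. lcompact a \<and> lcompact b \<longrightarrow> lcompact (mult a b)) \<and>
     (\<forall>x::'a. \<exists>S. (\<forall>c\<in>S. lcompact c) \<and> x = Sup S)"

definition lmaximal :: "'a::complete_lattice \<Rightarrow> bool" where
  "lmaximal m \<longleftrightarrow> m \<noteq> top \<and> (\<forall>x. m \<le> x \<and> x \<noteq> top \<longrightarrow> x = m)"

definition join_principal :: "('a::complete_lattice \<Rightarrow> 'a \<Rightarrow> 'a) \<Rightarrow> 'a \<Rightarrow> bool" where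
  "join_principal mult x \<longleftrightarrow>
     (\<forall>y z. sup y (lcolon mult z x) = lcolon mult (sup (mult y x) z) x)"

definition sharp :: "('a::complete_lattice \<Rightarrow> 'a \<Rightarrow> 'a) \<Rightarrow> bool" where
  "sharp mult \<longleftrightarrow> (\<forall>a1 a2 b. mult a1 a2 \<le> b \<longrightarrow>
     (\<exists>b1 b2. a1 \<le> b1 \<and> a2 \<le> b2 \<and> b = mult b1 b2))"

end

theory Submission
  imports Defs
begin

(*
  Put s = x \<squnion> y. Sharpness applied to s\<^sup>2 \<le> x\<^sup>2 \<squnion> y writes x\<^sup>2 \<squnion> y = b\<^sub>1 b\<^sub>2 with s \<le> b\<^sub>i,
  and each b\<^sub>i lies below (x\<^sup>2 \<squnion> y : s) \<le> (x\<^sup>2 \<squnion> y : x) = x \<squnion> (y : x), the last equality by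
  join principality. So (y : x) \<le> s forces s\<^sup>2 = x\<^sup>2 \<squnion> y. In (i) this holds in both orders,
  whence x \<le> y\<^sup>2 \<squnion> x = s\<^sup>2 = x\<^sup>2 \<squnion> y, so x \<squnion> (y : x) = (x\<^sup>2 \<squnion> y : x) = 1; and
  x \<squnion> (y : x) \<le> s.

  In (ii), compactness of 1 and Zorn's lemma put every proper element below m. For
  m = x \<squnion> y with x join principal, either (y : x) = 1, i.e. x \<le> y, or y \<le> x\<^sup>2 \<squnion> y = m\<^sup>2,
  and then m\<^sup>2 \<noteq> m, since otherwise x \<squnion> (y : x) = 1 as in (i). If no x\<^sub>i were redundant,
  every join of all but one x\<^sub>i would lie below m\<^sup>2 \<noteq> m, yet two of them join to m.
  Removing redundant x\<^sub>i one at a time therefore ends with a single x\<^sub>i = m.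
*)

lemma compact_top_chain_Sup_neq_top:
  fixes C :: "'a::complete_lattice set"
  assumes "lcompact (top::'a)" and "Complete_Partial_Order.chain (\<le>) C"
    and "C \<noteq> {}" and "top \<notin> C"
  shows "Sup C \<noteq> top"
proof
  assume "Sup C = top"
  then obtain T where T: "T \<subseteq> C" "finite T" "top \<le> Sup T"
    using assms(1) unfolding lcompact_def by (metis order_refl)
  obtain a where a: "a \<in> C"
    using assms(3) by blast
  have "Sup (insert a T) \<in> insert a T"
    using T a by (intro in_chain_finite chain_subset[OF assms(2)]) auto
  moreover have "Sup (insert a T) = top"
    using T(3) by (simp add: top_unique)
  ultimately show False
    using T(1) a assms(4) by auto
qed

lemma ex_lmaximal_above:
  fixes c :: "'a::complete_lattice"
  assumes compact: "lcompact (top::'a)" and "c \<noteq> top"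
  shows "\<exists>m. lmaximal m \<and> c \<le> m"
proof -
  define A where "A = {u. c \<le> u \<and> u \<noteq> top}"
  have "\<exists>m\<in>A. \<forall>a\<in>A. m \<le> a \<longrightarrow> a = m"
  proof (rule predicate_Zorn)
    show "partial_order_on A (relation_of (\<le>) A)"
      unfolding partial_order_on_def preorder_on_def refl_on_def trans_def antisym_def
        relation_of_def by auto
  next
    fix C assume C: "C \<in> Chains (relation_of (\<le>) A)"
    then have "C \<subseteq> A"
      by (rule Chains_relation_of)
    have chain: "Complete_Partial_Order.chain (\<le>) C"
      using C unfolding Chains_def relation_of_def Complete_Partial_Order.chain_def by auto
    show "\<exists>u\<in>A. \<forall>a\<in>C. a \<le> u"
    proof (cases "C = {}")
      case True
      then show ?thesis
        using assms(2) by (auto simp: A_def)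
    next
      case False
      then obtain a where "a \<in> C"
        by blast
      then have "c \<le> a"
        using \<open>C \<subseteq> A\<close> by (auto simp: A_def)
      also have "a \<le> Sup C"
        using \<open>a \<in> C\<close> by (rule Sup_upper)
      finally have "c \<le> Sup C" .
      moreover have "Sup C \<noteq> top"
        using compact_top_chain_Sup_neq_top[OF compact chain False] \<open>C \<subseteq> A\<close> by (auto simp: A_def)
      ultimately have "Sup C \<in> A"
        by (simp add: A_def)
      then show ?thesis
        by (auto intro: Sup_upper)
    qed
  qed
  then obtain m where m: "m \<in> A" and "\<forall>a\<in>A. m \<le> a \<longrightarrow> a = m"
    by blast
  then have "lmaximal m"
    using order_trans[of c m] by (auto simp: A_def lmaximal_def)
  with m show ?thesis
    by (auto simp: A_def)
qed

locale multiplicative_lattice =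
  fixes mult :: "'a::complete_lattice \<Rightarrow> 'a \<Rightarrow> 'a"  (infixl \<open>\<cdot>\<close> 70)
  assumes mult_lattice: "mult_lattice mult"
begin

lemma mult_commute: "a \<cdot> b = b \<cdot> a"
  using mult_lattice unfolding mult_lattice_def by blast

lemma mult_top_right [simp]: "a \<cdot> top = a"
  using mult_lattice unfolding mult_lattice_def by blast

lemma mult_top_left [simp]: "top \<cdot> a = a"
  using mult_commute mult_top_right by metis

lemma mult_Sup_right: "a \<cdot> Sup B = Sup ((\<cdot>) a ` B)"
  using mult_lattice unfolding mult_lattice_def by blast

lemma mult_sup_right: "a \<cdot> sup b c = sup (a \<cdot> b) (a \<cdot> c)"
  using mult_Sup_right[of a "{b, c}"] by simp

lemma mult_sup_left: "sup b c \<cdot> a = sup (b \<cdot> a) (c \<cdot> a)"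
  using mult_sup_right mult_commute by metis

lemma mult_mono_right: "b \<le> c \<Longrightarrow> a \<cdot> b \<le> a \<cdot> c"
  by (metis mult_sup_right sup.absorb_iff2)

lemma mult_mono_left: "b \<le> c \<Longrightarrow> b \<cdot> a \<le> c \<cdot> a"
  using mult_mono_right mult_commute by metis

lemma mult_le_left: "a \<cdot> b \<le> a"
  using mult_mono_right[of b top a] by simp

lemma mult_le_right: "a \<cdot> b \<le> b"
  using mult_mono_left[of a top b] by simp

lemma square_sup_le: "sup u v \<cdot> sup u v \<le> sup (u \<cdot> u) v"
  using mult_le_left[of v] mult_le_right[of u v]
  by (simp add: mult_sup_left mult_sup_right le_supI2)

lemma lcolon_mult_le: "lcolon mult y x \<cdot> x \<le> y"
proof -
  have "lcolon mult y x \<cdot> x = Sup ((\<lambda>a. a \<cdot> x) ` {a. a \<cdot> x \<le> y})"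
    unfolding lcolon_def using mult_Sup_right[of x] mult_commute by (simp add: image_image)
  also have "\<dots> \<le> y"
    by (auto intro: Sup_least)
  finally show ?thesis .
qed

lemma le_lcolon_iff: "a \<le> lcolon mult y x \<longleftrightarrow> a \<cdot> x \<le> y"
proof
  assume "a \<le> lcolon mult y x"
  then have "a \<cdot> x \<le> lcolon mult y x \<cdot> x"
    by (rule mult_mono_left)
  also have "\<dots> \<le> y"
    by (rule lcolon_mult_le)
  finally show "a \<cdot> x \<le> y" .
next
  assume "a \<cdot> x \<le> y"
  then show "a \<le> lcolon mult y x"
    unfolding lcolon_def by (simp add: Sup_upper)
qed

lemma lcolon_eq_top_iff: "lcolon mult y x = top \<longleftrightarrow> x \<le> y"
  using le_lcolon_iff[of top y x] by (simp add: top_unique)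

lemma lcolon_antimono:
  assumes "x \<le> x'"
  shows "lcolon mult y x' \<le> lcolon mult y x"
proof (rule le_lcolon_iff[THEN iffD2])
  have "lcolon mult y x' \<cdot> x \<le> lcolon mult y x' \<cdot> x'"
    using assms by (rule mult_mono_right)
  also have "\<dots> \<le> y"
    by (rule lcolon_mult_le)
  finally show "lcolon mult y x' \<cdot> x \<le> y" .
qed

lemma join_principal_lcolon:
  "join_principal mult x \<Longrightarrow> lcolon mult (sup (y \<cdot> x) z) x = sup y (lcolon mult z x)"
  unfolding join_principal_def by metis

lemma join_principal_sup_lcolon_eq_top:
  assumes "join_principal mult x" and "x \<le> sup (x \<cdot> x) y"
  shows "sup x (lcolon mult y x) = top"
proof -
  have "lcolon mult (sup (x \<cdot> x) y) x = top"
    using assms(2) by (simp add: lcolon_eq_top_iff)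
  then show ?thesis
    using join_principal_lcolon[OF assms(1)] by simp
qed

end

locale sharp_multiplicative_lattice = multiplicative_lattice +
  assumes sharp: "sharp mult"
begin

lemma sharp_square_eq:
  assumes "s \<cdot> s \<le> b" and "lcolon mult b s \<le> s"
  shows "b = s \<cdot> s"
proof -
  obtain b1 b2 where "s \<le> b1" and "s \<le> b2" and b: "b = b1 \<cdot> b2"
    using sharp assms(1) unfolding sharp_def by blast
  have "b1 \<le> lcolon mult b s"
    unfolding le_lcolon_iff b using \<open>s \<le> b2\<close> by (rule mult_mono_right)
  also have "\<dots> \<le> s"
    by (rule assms(2))
  finally have "b1 = s"
    using \<open>s \<le> b1\<close> by simp
  have "b2 \<le> lcolon mult b s"
    unfolding le_lcolon_iff b mult_commute[of b2 s] using \<open>s \<le> b1\<close> by (rule mult_mono_left)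
  also have "\<dots> \<le> s"
    by (rule assms(2))
  finally have "b2 = s"
    using \<open>s \<le> b2\<close> by simp
  show ?thesis
    unfolding b \<open>b1 = s\<close> \<open>b2 = s\<close> ..
qed

lemma join_principal_sup_square:
  assumes "join_principal mult u" and "lcolon mult v u \<le> sup u v"
  shows "sup u v \<cdot> sup u v = sup (u \<cdot> u) v"
proof (rule sharp_square_eq[symmetric])
  show "sup u v \<cdot> sup u v \<le> sup (u \<cdot> u) v"
    by (rule square_sup_le)
  have "lcolon mult (sup (u \<cdot> u) v) (sup u v) \<le> lcolon mult (sup (u \<cdot> u) v) u"
    by (rule lcolon_antimono) simp
  also have "\<dots> = sup u (lcolon mult v u)"
    using assms(1) by (rule join_principal_lcolon)
  also have "\<dots> \<le> sup u v"
    using assms(2) by simp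
  finally show "lcolon mult (sup (u \<cdot> u) v) (sup u v) \<le> sup u v" .
qed

lemma join_principal_sup_eq_top:
  assumes jx: "join_principal mult x" and jy: "join_principal mult y"
    and colons: "sup (lcolon mult x y) (lcolon mult y x) = sup x y"
  shows "sup x y = top"
proof -
  have yx: "lcolon mult y x \<le> sup x y" and xy: "lcolon mult x y \<le> sup y x"
    unfolding sup_commute[of y x] colons[symmetric] by simp_all
  have "x \<le> sup (y \<cdot> y) x"
    by simp
  also have "\<dots> = sup x y \<cdot> sup x y"
    using join_principal_sup_square[OF jy xy] by (simp add: sup_commute)
  also have "\<dots> = sup (x \<cdot> x) y"
    by (rule join_principal_sup_square[OF jx yx])
  finally have "sup x (lcolon mult y x) = top"
    by (rule join_principal_sup_lcolon_eq_top[OF jx])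
  moreover have "sup x (lcolon mult y x) \<le> sup x y"
    using yx by simp
  ultimately show ?thesis
    by (simp add: top_unique)
qed

context
  fixes m :: 'a
  assumes m_neq_top: "m \<noteq> top" and below_m: "\<And>c. c \<noteq> top \<Longrightarrow> c \<le> m"
begin

lemma quasi_local_join_principal_sup_cases:
  assumes jx: "join_principal mult x" and m: "sup x y = m"
  shows "x \<le> y \<or> (y \<le> m \<cdot> m \<and> m \<cdot> m \<noteq> m)"
proof (cases "lcolon mult y x = top")
  case True
  then show ?thesis
    by (simp add: lcolon_eq_top_iff)
next
  case False
  then have yx: "lcolon mult y x \<le> m"
    by (rule below_m)
  have x: "x \<le> m"
    unfolding m[symmetric] by simp
  have square: "m \<cdot> m = sup (x \<cdot> x) y"
    using join_principal_sup_square[OF jx, of y] yx unfolding m by blast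
  have "m \<cdot> m \<noteq> m"
  proof
    assume "m \<cdot> m = m"
    then have "x \<le> sup (x \<cdot> x) y"
      using square x by simp
    then have "sup x (lcolon mult y x) = top"
      by (rule join_principal_sup_lcolon_eq_top[OF jx])
    moreover have "sup x (lcolon mult y x) \<le> m"
      using x yx by simp
    ultimately show False
      using m_neq_top by (simp add: top_unique)
  qed
  then show ?thesis
    using square by simp
qed

lemma quasi_local_join_principal_Sup_redundant:
  assumes "\<exists>a\<in>X. \<exists>b\<in>X. a \<noteq> b" and "\<forall>x\<in>X. join_principal mult x" and "Sup X = m"
  shows "\<exists>x\<in>X. Sup (X - {x}) = m"
proof (rule ccontr)
  assume none: "\<not> ?thesis"
  have rest_le_square: "Sup (X - {x}) \<le> m \<cdot> m \<and> m \<cdot> m \<noteq> m" if "x \<in> X" for x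
  proof -
    have split: "sup x (Sup (X - {x})) = m"
      using assms(3) Sup_insert[of x "X - {x}"] by (simp add: insert_absorb that)
    have "\<not> x \<le> Sup (X - {x})"
    proof
      assume "x \<le> Sup (X - {x})"
      then have "Sup (X - {x}) = m"
        using split by (simp add: sup.absorb2)
      then show False
        using none that by blast
    qed
    then show ?thesis
      using quasi_local_join_principal_sup_cases[OF _ split] assms(2) that by blast
  qed
  obtain a b where a: "a \<in> X" and b: "b \<in> X" and "a \<noteq> b"
    using assms(1) by blast
  then have "(X - {a}) \<union> (X - {b}) = X"
    by blast
  then have "m = sup (Sup (X - {a})) (Sup (X - {b}))"
    using assms(3) Sup_union_distrib[of "X - {a}" "X - {b}"] by simp
  also have "\<dots> \<le> m \<cdot> m"
    using rest_le_square[OF a] rest_le_square[OF b] le_supI by blast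
  finally have "m \<cdot> m = m"
    using mult_le_left[of m m] by (intro order.antisym)
  then show False
    using rest_le_square[OF a] by blast
qed

lemma quasi_local_join_principal_Sup_mem:
  assumes "finite X" and "X \<noteq> {}" and "\<forall>x\<in>X. join_principal mult x" and "Sup X = m"
  shows "m \<in> X"
  using assms
proof (induction X rule: finite_remove_induct)
  case empty
  then show ?case
    by simp
next
  case (remove X)
  show ?case
  proof (cases "\<exists>a\<in>X. \<exists>b\<in>X. a \<noteq> b")
    case True
    then obtain x where "x \<in> X" and "Sup (X - {x}) = m"
      using quasi_local_join_principal_Sup_redundant remove.prems by blast
    moreover have "X - {x} \<noteq> {}"
      using True by blast
    ultimately show ?thesis
      using remove.IH[of x] remove.prems by blast
  next
    case False
    obtain x where "x \<in> X"
      using remove.hyps(2) by blast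
    with False have "X = {x}"
      by auto
    then show ?thesis
      using remove.prems by simp
  qed
qed

end

end

theorem theorem2p5:
  fixes mult :: "'a::complete_lattice \<Rightarrow> 'a \<Rightarrow> 'a"
  assumes "C_lattice mult" and "sharp mult"
  shows "(\<forall>x y. join_principal mult x \<and> join_principal mult y \<and>
            sup (lcolon mult x y) (lcolon mult y x) = sup x y \<longrightarrow> sup x y = top)
       \<and> (\<forall>m (n::nat) (x::nat \<Rightarrow> 'a).
            lmaximal m \<and> (\<forall>m'. lmaximal m' \<longrightarrow> m' = m) \<and> n \<ge> 1 \<and>
            (\<forall>i\<in>{1..n}. join_principal mult (x i)) \<and> m = (SUP i\<in>{1..n}. x i)
            \<longrightarrow> (\<exists>i\<in>{1..n}. m = x i))"
proof -
  interpret sharp_multiplicative_lattice mult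
    using assms by unfold_locales (simp_all add: C_lattice_def)
  have compact: "lcompact (top::'a)"
    using assms(1) by (simp add: C_lattice_def)
  show ?thesis
  proof (intro conjI allI impI; elim conjE)
    fix x y
    assume "join_principal mult x" "join_principal mult y"
      "sup (lcolon mult x y) (lcolon mult y x) = sup x y"
    then show "sup x y = top"
      by (rule join_principal_sup_eq_top)
  next
    fix m n and x :: "nat \<Rightarrow> 'a"
    assume max: "lmaximal m" and unique: "\<forall>m'. lmaximal m' \<longrightarrow> m' = m" and "n \<ge> 1"
      and jp: "\<forall>i\<in>{1..n}. join_principal mult (x i)" and m: "m = (SUP i\<in>{1..n}. x i)"
    have "m \<noteq> top"
      using max by (simp add: lmaximal_def)
    have below_m: "c \<le> m" if "c \<noteq> top" for c
      using ex_lmaximal_above[OF compact that] unique by blast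
    have "m \<in> x ` {1..n}"
      using quasi_local_join_principal_Sup_mem[OF \<open>m \<noteq> top\<close> below_m, of "x ` {1..n}"] jp m \<open>n \<ge> 1\<close>
      by simp
    then show "\<exists>i\<in>{1..n}. m = x i"
      by auto
  qed
qed

end
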